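(* $\delta=\dfrac{\cos\psi}{\cos\tfrac23\psi}$, where $\delta=\phi'$.
   Context: Let $0<\kappa<1$. Let $F(\tfrac16,\tfrac56;\tfrac12;\cdot)$ denote the Gauss hypergeometric function. Define $u$ as a function of $\phi$ near $0$ by $u=\int_0^{\sin\phi}F(\tfrac16,\tfrac56;\tfrac12;\kappa^2t^2)\,\frac{dt}{\sqrt{1-t^2}}$; near the origin (fixing $0$) this inverts to a holomorphic function $u\mapsto\phi(u)$ with $\phi(0)=0$. Let $\psi$ be the holomorphic function near $0$ with $\psi(0)=0$ and $\sin\psi=\kappa\sin\phi$. All functions are regarded as functions of $u$ on a small disc about $0$; $\delta=\phi'=d\phi/du$. *)

theory Defs
  imports "HOL-Complex_Analysis.Complex_Analysis"
begin

definition hyp2f1 :: "complex \<Rightarrow> complex \<Rightarrow> complex \<Rightarrow> complex \<Rightarrow> complex" where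
  "hyp2f1 a b c z =
     (\<Sum>n. pochhammer a n * pochhammer b n / (pochhammer c n * fact n) * z ^ n)"

definition uint :: "real \<Rightarrow> complex \<Rightarrow> complex" where
  "uint \<kappa> \<phi> = contour_integral (linepath 0 (sin \<phi>))
     (\<lambda>t. hyp2f1 (1/6) (5/6) (1/2) ((complex_of_real \<kappa>)\<^sup>2 * t\<^sup>2) / csqrt (1 - t\<^sup>2))"

end

theory Submission
  imports Defs "HOL-Analysis.FPS_Convergence"
begin

text \<open>
  Write \<open>F = F(1/6, 5/6; 1/2; \<cdot>)\<close>. The Gauss series \<open>F(a, 1 - a; 1/2; \<cdot>)\<close> solves the
  hypergeometric equation, which turns into \<open>P'' = -(1 - 2a)\<^sup>2 P\<close> for
  \<open>P z = cos z * F(a, 1 - a; 1/2; sin\<^sup>2 z)\<close>; with \<open>P 0 = 1\<close>, \<open>P' 0 = 0\<close> this gives the classical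
  identity \<open>F(a, 1 - a; 1/2; sin\<^sup>2 z) = cos ((1 - 2a) z) / cos z\<close>, here with \<open>1 - 2a = 2/3\<close>.
  Differentiating \<open>u = G (sin (\<phi> u)) - G 0\<close>, where \<open>G\<close> is a primitive of the integrand,
  and using \<open>csqrt (1 - sin\<^sup>2 \<phi>) = cos \<phi>\<close> and \<open>\<kappa>\<^sup>2 sin\<^sup>2 \<phi> = sin\<^sup>2 \<psi>\<close> gives
  \<open>F (sin\<^sup>2 \<psi>) * \<phi>' = 1\<close>, i.e. \<open>\<phi>' = cos \<psi> / cos (2/3 \<psi>)\<close>.
\<close>

abbreviation gauss_fps :: "'a::field_char_0 \<Rightarrow> 'a \<Rightarrow> 'a \<Rightarrow> 'a fps" where
  "gauss_fps a b c \<equiv> fps_hypergeo [a, b] [c] 1"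

lemma hyp2f1_eq_eval_fps: "hyp2f1 a b c = eval_fps (gauss_fps a b c)"
  by (simp add: fun_eq_iff hyp2f1_def eval_fps_def)

lemma gauss_fps_nth_Suc:
  "fps_nth (gauss_fps a b c) (Suc n) =
     (a + of_nat n) * (b + of_nat n) / ((of_nat n + 1) * (c + of_nat n)) * fps_nth (gauss_fps a b c) n"
  by (simp add: fps_hypergeo_rec del: fps_hypergeo_nth)

lemma LIMSEQ_add_of_nat_over_add_of_nat:
  "(\<lambda>n. (a + of_nat n) / (b + of_nat n) :: 'a::real_normed_field) \<longlonglongrightarrow> 1"
proof (rule Lim_transform_eventually)
  show "\<forall>\<^sub>F n in sequentially.
      (a * inverse (of_nat n) + 1) / (b * inverse (of_nat n) + 1) = (a + of_nat n) / (b + of_nat n)"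
    using eventually_gt_at_top[of "0::nat"]
  proof eventually_elim
    case (elim n)
    then have "x * inverse (of_nat n) + 1 = (x + of_nat n) * inverse (of_nat n :: 'a)" for x
      by (simp add: distrib_right)
    then show ?case
      using elim by simp
  qed
  have "(\<lambda>n. (a * inverse (of_nat n) + 1) / (b * inverse (of_nat n) + 1) :: 'a)
      \<longlonglongrightarrow> (a * 0 + 1) / (b * 0 + 1)"
    by (intro tendsto_intros lim_inverse_n) simp
  then show "(\<lambda>n. (a * inverse (of_nat n) + 1) / (b * inverse (of_nat n) + 1) :: 'a) \<longlonglongrightarrow> 1"
    by simp
qed

text \<open>No hypothesis on \<open>c\<close> is needed: if \<open>c + n = 0\<close>, the junk value \<open>x / 0 = 0\<close> in
  \<open>gauss_fps_nth_Suc\<close> makes the series a polynomial.\<close>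

lemma fps_conv_radius_gauss_fps: "fps_conv_radius (gauss_fps a b (c::complex)) \<ge> 1"
  unfolding fps_conv_radius_def
proof (rule conv_radius_geI_ex')
  fix r :: real assume "0 < r" "ereal r < 1"
  then have r: "0 < r" "r < 1" by simp_all
  define q where "q n = (a + of_nat n) / (1 + of_nat n) * ((b + of_nat n) / (c + of_nat n))" for n
  have "q \<longlonglongrightarrow> 1 * 1"
    unfolding q_def by (intro tendsto_mult LIMSEQ_add_of_nat_over_add_of_nat)
  then have "(\<lambda>n. norm (q n)) \<longlonglongrightarrow> 1"
    by (metis mult_1 norm_one tendsto_norm)
  moreover have "1 < (1 + r) / (2 * r)"
    using r by (simp add: field_simps)
  ultimately obtain N where N: "\<And>n. n \<ge> N \<Longrightarrow> norm (q n) < (1 + r) / (2 * r)"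
    by (metis (no_types, lifting) eventually_sequentially order_tendstoD(2))
  show "summable (\<lambda>n. fps_nth (gauss_fps a b c) n * of_real r ^ n)"
  proof (rule summable_ratio_test)
    show "(1 + r) / 2 < 1" using r by simp
    fix n assume "n \<ge> N"
    have "fps_nth (gauss_fps a b c) (Suc n) = q n * fps_nth (gauss_fps a b c) n"
      unfolding gauss_fps_nth_Suc q_def by (simp add: algebra_simps)
    then have "norm (fps_nth (gauss_fps a b c) (Suc n) * of_real r ^ Suc n)
        = norm (q n) * r * norm (fps_nth (gauss_fps a b c) n * of_real r ^ n)"
      using r by (simp add: norm_mult norm_power del: fps_hypergeo_nth)
    also have "\<dots> \<le> (1 + r) / 2 * norm (fps_nth (gauss_fps a b c) n * of_real r ^ n)"
      using N[OF \<open>n \<ge> N\<close>] r by (intro mult_right_mono) (simp_all add: field_simps)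
    finally show "norm (fps_nth (gauss_fps a b c) (Suc n) * of_real r ^ Suc n)
        \<le> (1 + r) / 2 * norm (fps_nth (gauss_fps a b c) n * of_real r ^ n)" .
  qed
qed

lemma gauss_fps_ode:
  fixes a b c :: "'a::field_char_0"
  defines "F \<equiv> gauss_fps a b c"
  assumes "\<And>n. c + of_nat n \<noteq> 0"
  shows "fps_X * (1 - fps_X) * fps_deriv (fps_deriv F)
     + (fps_const c - fps_const (a + b + 1) * fps_X) * fps_deriv F - fps_const (a * b) * F = 0"
proof (rule fps_ext)
  fix n
  have "(of_nat n + 1 :: 'a) \<noteq> 0"
    by (metis of_nat_Suc of_nat_eq_0_iff add.commute nat.distinct(1))
  then have rec: "(of_nat n + 1) * (c + of_nat n) * fps_nth F (Suc n)
      = (a + of_nat n) * (b + of_nat n) * fps_nth F n"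
    using assms(2)[of n] unfolding F_def gauss_fps_nth_Suc by (simp del: fps_hypergeo_nth)
  show "fps_nth (fps_X * (1 - fps_X) * fps_deriv (fps_deriv F)
     + (fps_const c - fps_const (a + b + 1) * fps_X) * fps_deriv F - fps_const (a * b) * F) n = fps_nth 0 n"
    using rec by (cases n) (auto simp: algebra_simps simp del: fps_hypergeo_nth)
qed

lemma norm_less_fps_conv_radius_add:
  "norm z < fps_conv_radius f \<Longrightarrow> norm z < fps_conv_radius g \<Longrightarrow> norm z < fps_conv_radius (f + g)"
  using fps_conv_radius_add[of f g] by (metis min_less_iff_conj order.strict_trans2)

lemma norm_less_fps_conv_radius_diff:
  "norm z < fps_conv_radius f \<Longrightarrow> norm z < fps_conv_radius g \<Longrightarrow> norm z < fps_conv_radius (f - g)"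
  using fps_conv_radius_diff[of f g] by (metis min_less_iff_conj order.strict_trans2)

lemma norm_less_fps_conv_radius_mult:
  "norm z < fps_conv_radius f \<Longrightarrow> norm z < fps_conv_radius g \<Longrightarrow> norm z < fps_conv_radius (f * g)"
  using fps_conv_radius_mult[of f g] by (metis min_less_iff_conj order.strict_trans2)

lemma norm_less_fps_conv_radius_gauss_fps_derivs:
  fixes a b c z :: complex
  assumes "norm z < 1"
  shows "norm z < fps_conv_radius (gauss_fps a b c)"
    and "norm z < fps_conv_radius (fps_deriv (gauss_fps a b c))"
    and "norm z < fps_conv_radius (fps_deriv (fps_deriv (gauss_fps a b c)))"
proof -
  show *: "norm z < fps_conv_radius (gauss_fps a b c)"
    using assms fps_conv_radius_gauss_fps[of a b c]
    by (metis ereal_less(3) order.strict_trans2)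
  show **: "norm z < fps_conv_radius (fps_deriv (gauss_fps a b c))"
    using * fps_conv_radius_deriv order.strict_trans2 by blast
  show "norm z < fps_conv_radius (fps_deriv (fps_deriv (gauss_fps a b c)))"
    using ** fps_conv_radius_deriv order.strict_trans2 by blast
qed

lemma eval_gauss_fps_ode:
  fixes a b c z :: complex
  defines "F \<equiv> gauss_fps a b c"
  assumes "\<And>n. c + of_nat n \<noteq> 0" and "norm z < 1"
  shows "z * (1 - z) * eval_fps (fps_deriv (fps_deriv F)) z
     + (c - (a + b + 1) * z) * eval_fps (fps_deriv F) z - a * b * eval_fps F z = 0"
proof -
  note radii = norm_less_fps_conv_radius_gauss_fps_derivs[OF assms(3),
      where a=a and b=b and c=c, folded F_def]
  have "eval_fps (fps_X * (1 - fps_X) * fps_deriv (fps_deriv F)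
     + (fps_const c - fps_const (a + b + 1) * fps_X) * fps_deriv F - fps_const (a * b) * F) z = 0"
    unfolding F_def gauss_fps_ode[OF assms(2)] by simp
  then show ?thesis
    by (simp add: radii eval_fps_mult eval_fps_add eval_fps_diff norm_less_fps_conv_radius_add
        norm_less_fps_conv_radius_diff norm_less_fps_conv_radius_mult)
qed

lemma DERIV_cos_times_comp_sin_sq:
  assumes "(F has_field_derivative F' (sin z ^ 2)) (at (sin z ^ 2))"
  shows "((\<lambda>w. cos w * F (sin w ^ 2)) has_field_derivative
           - sin z * F (sin z ^ 2) + 2 * sin z * cos z ^ 2 * F' (sin z ^ 2)) (at z)"
proof -
  have "((\<lambda>w. F (sin w ^ 2)) has_field_derivative F' (sin z ^ 2) * (2 * sin z * cos z)) (at z)"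
    by (rule DERIV_chain2[where g="\<lambda>w. sin w ^ 2", OF assms]) (auto intro!: derivative_eq_intros)
  then show ?thesis
    by (auto intro!: derivative_eq_intros simp: algebra_simps power2_eq_square)
qed

lemma DERIV_cos_times_comp_sin_sq_second:
  fixes a z :: complex
  assumes F: "(F has_field_derivative F' (sin z ^ 2)) (at (sin z ^ 2))"
    and F': "(F' has_field_derivative F'' (sin z ^ 2)) (at (sin z ^ 2))"
    and ode: "sin z ^ 2 * (1 - sin z ^ 2) * F'' (sin z ^ 2) + (1/2 - 2 * sin z ^ 2) * F' (sin z ^ 2)
      - a * (1 - a) * F (sin z ^ 2) = 0"
  shows "((\<lambda>w. - sin w * F (sin w ^ 2) + 2 * sin w * cos w ^ 2 * F' (sin w ^ 2)) has_field_derivative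
           - ((1 - 2 * a) ^ 2 * (cos z * F (sin z ^ 2)))) (at z)"
proof -
  have "((\<lambda>w. F (sin w ^ 2)) has_field_derivative F' (sin z ^ 2) * (2 * sin z * cos z)) (at z)"
    by (rule DERIV_chain2[where g="\<lambda>w. sin w ^ 2", OF F]) (auto intro!: derivative_eq_intros)
  moreover have "((\<lambda>w. F' (sin w ^ 2)) has_field_derivative F'' (sin z ^ 2) * (2 * sin z * cos z)) (at z)"
    by (rule DERIV_chain2[where g="\<lambda>w. sin w ^ 2", OF F']) (auto intro!: derivative_eq_intros)
  ultimately show ?thesis
    by (auto intro!: derivative_eq_intros) (use ode sin_cos_squared_add[of z] in algebra)
qed

lemma second_order_ode_eq_cos:
  fixes f g :: "complex \<Rightarrow> complex"
  assumes S: "convex S" "0 \<in> S" "z \<in> S"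
    and f: "\<And>w. w \<in> S \<Longrightarrow> (f has_field_derivative g w) (at w)"
    and g: "\<And>w. w \<in> S \<Longrightarrow> (g has_field_derivative - (k ^ 2 * f w)) (at w)"
    and init: "f 0 = 1" "g 0 = 0"
  shows "f z = cos (k * z)"
proof (cases "k = 0")
  case True
  have "g w = g 0" if "w \<in> S" for w
    using has_field_derivative_zero_constant[OF S(1), of g] g True S(2) that
    by (metis has_field_derivative_at_within mult_zero_left neg_0_equal_iff_equal power_zero_numeral)
  then have "f w = f 0" if "w \<in> S" for w
    using has_field_derivative_zero_constant[OF S(1), of f] f init(2) S(2) that
    by (metis has_field_derivative_at_within)
  then show ?thesis
    using S(3) True init(1) by simp
next
  case False
  \<comment> \<open>first integrals of \<open>f'' = -k\<^sup>2 f\<close>\<close>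
  define A where "A w = k * f w * cos (k * w) - g w * sin (k * w)" for w
  define B where "B w = k * f w * sin (k * w) + g w * cos (k * w)" for w
  have "(A has_field_derivative 0) (at w)" "(B has_field_derivative 0) (at w)" if "w \<in> S" for w
    unfolding A_def[abs_def] B_def[abs_def] using f[OF that] g[OF that]
    by (auto intro!: derivative_eq_intros simp: algebra_simps power2_eq_square)
  then obtain cA cB where "\<forall>w\<in>S. A w = cA" "\<forall>w\<in>S. B w = cB"
    using has_field_derivative_zero_constant[OF S(1)] has_field_derivative_at_within by metis
  then have "A z = A 0" "B z = B 0"
    using S by simp_all
  then have "A z = k" "B z = 0"
    using init by (simp_all add: A_def B_def)
  have "k * f z = k * f z * (sin (k * z) ^ 2 + cos (k * z) ^ 2)"
    by simp
  also have "\<dots> = A z * cos (k * z) + B z * sin (k * z)"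
    unfolding A_def B_def by algebra
  finally have "k * f z = k * cos (k * z)"
    using \<open>A z = k\<close> \<open>B z = 0\<close> by simp
  with False show ?thesis
    by simp
qed

lemma half_plus_of_nat_neq_0: "1/2 + of_nat n \<noteq> (0::complex)"
proof
  assume "1/2 + of_nat n = (0::complex)"
  then have "Re (1/2 + of_nat n) = 0" by simp
  then show False by simp
qed

lemma cos_times_hyp2f1_sin_sq:
  fixes a :: complex
  shows "\<forall>\<^sub>F z in nhds 0. cos z * hyp2f1 a (1 - a) (1/2) (sin z ^ 2) = cos ((1 - 2 * a) * z)"
proof -
  define F where "F = gauss_fps a (1 - a) (1/2)"
  define H H' H'' where "H = eval_fps F" and "H' = eval_fps (fps_deriv F)"
    and "H'' = eval_fps (fps_deriv (fps_deriv F))"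
  have "open {z::complex. norm (sin z ^ 2) < 1}"
    by (intro open_Collect_less continuous_intros)
  moreover have "0 \<in> {z::complex. norm (sin z ^ 2) < 1}"
    by simp
  ultimately obtain \<rho> where "\<rho> > 0" and "ball 0 \<rho> \<subseteq> {z::complex. norm (sin z ^ 2) < 1}"
    by (rule openE)
  then have \<rho>: "norm (sin z ^ 2) < 1" if "z \<in> ball 0 \<rho>" for z :: complex
    using that by blast
  have "cos z * H (sin z ^ 2) = cos ((1 - 2 * a) * z)" if "z \<in> ball 0 \<rho>" for z :: complex
  proof (rule second_order_ode_eq_cos[OF convex_ball _ that])
    fix w :: complex assume "w \<in> ball 0 \<rho>"
    note radii = norm_less_fps_conv_radius_gauss_fps_derivs[OF \<rho>[OF this],
        where a=a and b="1 - a" and c="1/2", folded F_def]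
    have H: "(H has_field_derivative H' (sin w ^ 2)) (at (sin w ^ 2))"
      unfolding H_def H'_def by (rule has_field_derivative_eval_fps[OF radii(1)])
    have H': "(H' has_field_derivative H'' (sin w ^ 2)) (at (sin w ^ 2))"
      unfolding H'_def H''_def by (rule has_field_derivative_eval_fps[OF radii(2)])
    have "sin w ^ 2 * (1 - sin w ^ 2) * H'' (sin w ^ 2) + (1/2 - 2 * sin w ^ 2) * H' (sin w ^ 2)
        - a * (1 - a) * H (sin w ^ 2) = 0"
      using eval_gauss_fps_ode[OF half_plus_of_nat_neq_0 \<rho>[OF \<open>w \<in> ball 0 \<rho>\<close>], of a "1 - a"]
      by (simp add: F_def H_def H'_def H''_def)
    then show "((\<lambda>w. - sin w * H (sin w ^ 2) + 2 * sin w * cos w ^ 2 * H' (sin w ^ 2))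
        has_field_derivative - ((1 - 2 * a) ^ 2 * (cos w * H (sin w ^ 2)))) (at w)"
      by (rule DERIV_cos_times_comp_sin_sq_second[where F'=H' and F''=H'', OF H H'])
    show "((\<lambda>w. cos w * H (sin w ^ 2)) has_field_derivative
        - sin w * H (sin w ^ 2) + 2 * sin w * cos w ^ 2 * H' (sin w ^ 2)) (at w)"
      by (rule DERIV_cos_times_comp_sin_sq[where F'=H', OF H])
  qed (use \<open>\<rho> > 0\<close> in \<open>simp_all add: H_def F_def eval_fps_at_0\<close>)
  then show ?thesis
    using eventually_nhds_ball[OF \<open>\<rho> > 0\<close>, of 0]
    unfolding hyp2f1_eq_eval_fps H_def F_def by (auto elim!: eventually_mono)
qed

lemma hyp2f1_sin_sq_near_0:
  fixes a :: complex
  shows "\<forall>\<^sub>F z in nhds 0. hyp2f1 a (1 - a) (1/2) (sin z ^ 2) = cos ((1 - 2 * a) * z) / cos z"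
proof -
  have "\<forall>\<^sub>F z in nhds 0. z \<in> {z::complex. cos z \<noteq> 0}"
    by (intro eventually_nhds_in_open open_Collect_neq continuous_intros) auto
  with cos_times_hyp2f1_sin_sq[of a] show ?thesis
    by eventually_elim (auto simp: field_simps)
qed

lemma Re_one_minus_square_pos:
  assumes "norm (t::complex) < 1"
  shows "0 < Re (1 - t ^ 2)"
proof -
  have "Re (t ^ 2) \<le> norm t ^ 2"
    using complex_Re_le_cmod[of "t ^ 2"] by (simp add: norm_power)
  also have "\<dots> < 1"
    using assms by (simp add: abs_square_less_1)
  finally show ?thesis
    by simp
qed

lemma holomorphic_on_hyp2f1_integrand:
  fixes k :: complex
  assumes "norm k \<le> 1"
  shows "(\<lambda>t. hyp2f1 a b c (k ^ 2 * t ^ 2) / csqrt (1 - t ^ 2)) holomorphic_on ball 0 1"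
proof -
  have "norm (k ^ 2 * t ^ 2) < 1" if "norm t < 1" for t
  proof -
    have "norm k ^ 2 * norm t ^ 2 \<le> norm t ^ 2"
      using assms by (simp add: mult_left_le_one_le power_le_one)
    also have "\<dots> < 1"
      using that by (simp add: abs_square_less_1)
    finally show ?thesis
      by (simp add: norm_mult norm_power)
  qed
  then have "(\<lambda>t. k ^ 2 * t ^ 2) ` ball 0 1 \<subseteq> ball 0 1"
    by auto
  moreover have "hyp2f1 a b c holomorphic_on ball 0 1"
    unfolding hyp2f1_eq_eval_fps
    by (rule holomorphic_on_eval_fps) (auto dest: norm_less_fps_conv_radius_gauss_fps_derivs(1))
  ultimately have "(\<lambda>t. hyp2f1 a b c (k ^ 2 * t ^ 2)) holomorphic_on ball 0 1"
    using holomorphic_on_compose_gen[of "\<lambda>t. k ^ 2 * t ^ 2" "ball 0 1" "hyp2f1 a b c" "ball 0 1"]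
    by (simp add: o_def holomorphic_on_mult holomorphic_on_power)
  moreover have "1 - t ^ 2 \<notin> \<real>\<^sub>\<le>\<^sub>0" "csqrt (1 - t ^ 2) \<noteq> 0" if "t \<in> ball 0 1" for t
    using Re_one_minus_square_pos[of t] that by (auto simp: complex_nonpos_Reals_iff)
  ultimately show ?thesis
    by (intro holomorphic_intros) auto
qed

lemma holomorphic_convex_primitive_linepath:
  fixes g :: "complex \<Rightarrow> complex"
  assumes "convex S" "open S" "g holomorphic_on S"
  obtains G where "\<And>x. x \<in> S \<Longrightarrow> (G has_field_derivative g x) (at x)"
    and "\<And>v w. v \<in> S \<Longrightarrow> w \<in> S \<Longrightarrow> contour_integral (linepath v w) g = G w - G v"
proof -
  obtain G where G: "\<And>x. x \<in> S \<Longrightarrow> (G has_field_derivative g x) (at x)"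
    using holomorphic_convex_primitive'[OF assms] at_within_open[OF _ \<open>open S\<close>] by metis
  moreover have "contour_integral (linepath v w) g = G w - G v" if "v \<in> S" "w \<in> S" for v w
  proof -
    have "path_image (linepath v w) \<subseteq> S"
      using \<open>convex S\<close> that by (simp add: closed_segment_subset)
    then have "(g has_contour_integral G w - G v) (linepath v w)"
      using contour_integral_primitive[of S G g "linepath v w"] G
      by (simp add: has_field_derivative_at_within)
    then show ?thesis
      by (rule contour_integral_unique)
  qed
  ultimately show ?thesis
    using that by blast
qed

lemma uint_eq_primitive_diff:
  assumes "\<bar>\<kappa>\<bar> \<le> 1"
  obtains G where
    "\<And>x. x \<in> ball 0 1 \<Longrightarrow>
       (G has_field_derivative hyp2f1 (1/6) (5/6) (1/2) (of_real \<kappa> ^ 2 * x ^ 2) / csqrt (1 - x ^ 2)) (at x)"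
    and "\<And>p. sin p \<in> ball 0 1 \<Longrightarrow> uint \<kappa> p = G (sin p) - G 0"
proof -
  have "norm (complex_of_real \<kappa>) \<le> 1"
    using assms by simp
  with holomorphic_convex_primitive_linepath[OF convex_ball open_ball
      holomorphic_on_hyp2f1_integrand[where a="1/6" and b="5/6" and c="1/2"]]
  obtain G where G': "\<And>x. x \<in> ball 0 1 \<Longrightarrow>
       (G has_field_derivative hyp2f1 (1/6) (5/6) (1/2) (of_real \<kappa> ^ 2 * x ^ 2) / csqrt (1 - x ^ 2)) (at x)"
    and G: "\<And>v w. v \<in> ball 0 1 \<Longrightarrow> w \<in> ball 0 1 \<Longrightarrow> contour_integral (linepath v w)
       (\<lambda>t. hyp2f1 (1/6) (5/6) (1/2) (of_real \<kappa> ^ 2 * t ^ 2) / csqrt (1 - t ^ 2)) = G w - G v"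
    by blast
  show ?thesis
  proof (rule that[OF G'])
    fix p :: complex assume "sin p \<in> ball 0 1"
    then show "uint \<kappa> p = G (sin p) - G 0"
      unfolding uint_def by (intro G) simp_all
  qed
qed

lemma csqrt_one_minus_sin_sq: "0 < Re (cos w) \<Longrightarrow> csqrt (1 - sin w ^ 2) = cos w"
  by (rule csqrt_unique) (simp_all add: cos_squared_eq)

lemma DERIV_left_inverse_mult_eq_1:
  assumes "\<forall>\<^sub>F v in nhds u. G (h v) = v + C"
    and "(G has_field_derivative g) (at (h u))" "(h has_field_derivative h') (at u)"
  shows "g * h' = 1"
proof (rule DERIV_unique)
  show "((\<lambda>v. G (h v)) has_field_derivative g * h') (at u)"
    using DERIV_chain2 assms(2,3) .
  show "((\<lambda>v. G (h v)) has_field_derivative 1) (at u)"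
    using DERIV_cong_ev[OF refl assms(1) refl] by (auto intro!: derivative_eq_intros)
qed

lemma DERIV_inverse_sin_integral:
  fixes k :: complex
  assumes inv: "\<forall>\<^sub>F v in nhds u. G (sin (\<phi> v)) = v + C"
    and G': "(G has_field_derivative H (k ^ 2 * sin (\<phi> u) ^ 2) / csqrt (1 - sin (\<phi> u) ^ 2))
      (at (sin (\<phi> u)))"
    and \<phi>': "(\<phi> has_field_derivative \<phi>') (at u)"
    and "0 < Re (cos (\<phi> u))" and "sin w = k * sin (\<phi> u)"
  shows "H (sin w ^ 2) * \<phi>' = 1"
proof -
  have "((\<lambda>v. sin (\<phi> v)) has_field_derivative cos (\<phi> u) * \<phi>') (at u)"
    by (rule DERIV_chain2[OF DERIV_sin \<phi>'])
  from DERIV_left_inverse_mult_eq_1[OF inv G' this]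
  have "H (sin w ^ 2) / cos (\<phi> u) * (cos (\<phi> u) * \<phi>') = 1"
    using assms(4,5) csqrt_one_minus_sin_sq by (simp add: power_mult_distrib)
  moreover have "cos (\<phi> u) \<noteq> 0"
    using assms(4) by auto
  ultimately show ?thesis
    by simp
qed

lemma eventually_nhds_isCont_comp:
  "isCont f x \<Longrightarrow> eventually P (nhds (f x)) \<Longrightarrow> \<forall>\<^sub>F y in nhds x. P (f y)"
  using eventually_compose_filterlim tendsto_at_iff_tendsto_nhds isCont_def by metis

lemma uint_inverse_deriv:
  fixes \<phi> :: "complex \<Rightarrow> complex"
  assumes "\<bar>\<kappa>\<bar> \<le> 1" and inv: "\<forall>\<^sub>F v in nhds u. uint \<kappa> (\<phi> v) = v"
    and \<phi>': "(\<phi> has_field_derivative \<phi>') (at u)"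
    and "sin (\<phi> u) \<in> ball 0 1" "0 < Re (cos (\<phi> u))" "sin w = of_real \<kappa> * sin (\<phi> u)"
  shows "hyp2f1 (1/6) (5/6) (1/2) (sin w ^ 2) * \<phi>' = 1"
proof -
  obtain G where G': "\<And>x. x \<in> ball 0 1 \<Longrightarrow>
      (G has_field_derivative hyp2f1 (1/6) (5/6) (1/2) (of_real \<kappa> ^ 2 * x ^ 2) / csqrt (1 - x ^ 2)) (at x)"
    and G: "\<And>p. sin p \<in> ball 0 1 \<Longrightarrow> uint \<kappa> p = G (sin p) - G 0"
    using uint_eq_primitive_diff assms(1) by blast
  have "\<forall>\<^sub>F p in nhds (\<phi> u). p \<in> {p. norm (sin p) < 1}"
    using assms(4) by (intro eventually_nhds_in_open open_Collect_less continuous_intros) auto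
  then have "\<forall>\<^sub>F v in nhds u. sin (\<phi> v) \<in> ball 0 1"
    using eventually_nhds_isCont_comp[OF DERIV_isCont[OF \<phi>']] by simp
  with inv have "\<forall>\<^sub>F v in nhds u. G (sin (\<phi> v)) = v + G 0"
    by eventually_elim (metis G diff_add_cancel)
  from DERIV_inverse_sin_integral[where \<phi>=\<phi> and H="hyp2f1 (1/6) (5/6) (1/2)", OF this G'[OF assms(4)] \<phi>' assms(5,6)]
  show ?thesis .
qed

theorem theorem1:
  fixes \<kappa> :: real and r :: real and \<phi> \<psi> :: "complex \<Rightarrow> complex"
  assumes "0 < \<kappa>" and "\<kappa> < 1"
    and "0 < r"
    and "\<phi> holomorphic_on ball 0 r" and "\<phi> 0 = 0"
    and "\<And>u. u \<in> ball 0 r \<Longrightarrow> uint \<kappa> (\<phi> u) = u"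
    and "\<psi> holomorphic_on ball 0 r" and "\<psi> 0 = 0"
    and "\<And>u. u \<in> ball 0 r \<Longrightarrow> sin (\<psi> u) = complex_of_real \<kappa> * sin (\<phi> u)"
  shows "\<exists>e>0. \<forall>u\<in>ball 0 e. deriv \<phi> u = cos (\<psi> u) / cos (2/3 * \<psi> u)"
proof -
  have "isCont \<phi> 0" "isCont \<psi> 0"
    using assms(3,4,7) by (auto intro!: field_differentiable_imp_continuous_at
        holomorphic_on_imp_differentiable_at[OF _ open_ball])
  moreover have "\<forall>\<^sub>F p in nhds 0. p \<in> {p::complex. norm (sin p) < 1 \<and> 0 < Re (cos p)}"
    by (intro eventually_nhds_in_open open_Collect_conj open_Collect_less continuous_intros) auto
  moreover note hyp2f1_sin_sq_near_0[of "1/6"]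
  ultimately have "\<forall>\<^sub>F u in nhds 0. u \<in> ball 0 r \<and> sin (\<phi> u) \<in> ball 0 1 \<and> 0 < Re (cos (\<phi> u)) \<and>
      hyp2f1 (1/6) (5/6) (1/2) (sin (\<psi> u) ^ 2) = cos (2/3 * \<psi> u) / cos (\<psi> u)"
    using eventually_nhds_ball[OF assms(3), of 0] eventually_nhds_isCont_comp assms(5,8)
    by (fastforce simp: eventually_conj_iff)
  then have "\<forall>\<^sub>F u in nhds 0. deriv \<phi> u = cos (\<psi> u) / cos (2/3 * \<psi> u)"
  proof eventually_elim
    case (elim u)
    have "\<forall>\<^sub>F v in nhds u. uint \<kappa> (\<phi> v) = v"
      using eventually_nhds_in_open[OF open_ball] elim assms(6) by (blast intro: eventually_mono)
    moreover have "(\<phi> has_field_derivative deriv \<phi> u) (at u)"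
      using elim by (intro holomorphic_derivI[OF assms(4) open_ball]) auto
    ultimately have "hyp2f1 (1/6) (5/6) (1/2) (sin (\<psi> u) ^ 2) * deriv \<phi> u = 1"
      using elim assms(1,2,9) by (intro uint_inverse_deriv[where \<phi>=\<phi> and u=u]) auto
    with elim show ?case
      by (metis inverse_divide inverse_unique)
  qed
  then show ?thesis
    by (auto simp: eventually_nhds_metric dist_commute)
qed

end
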